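(* For all integers $m\ge 0$ and $n\ge 1$, $$\int_0^{\pi/2}x^{2m}\cos^{2n}(x)\,dx=(2m)!\,\frac{\binom{2n}{n}}{4^n}\sum_{j=0}^m\frac{(-1)^j\,\zeta_n^{\star}(\{2\}_j)}{2^{2j}(2m-2j+1)!}\left(\frac{\pi}{2}\right)^{2m-2j+1}.$$
   Context: For integers $n\ge1$ and $j\ge0$, the multiple harmonic star sum of depth $j$ and weight $2j$ is $\zeta_n^{\star}(\{2\}_j)=\sum_{n\ge k_1\ge\dots\ge k_j\ge1}\prod_{i=1}^j\frac{1}{k_i^2}$, with $\zeta_n^{\star}(\{2\}_0)=1$. *)

theory Defs
  imports "HOL-Analysis.Analysis"
begin

text \<open>Multiple harmonic star sum zeta*_n({2}_j): sum over n >= k_1 >= ... >= k_j >= 1 of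
  prod 1/k_i^2. Index tuples are represented as functions k on {0..<j} (indices shifted by one),
  extensional (k i = 1 outside {0..<j}) so the index set is finite.\<close>
definition zeta_star_2 :: "nat \<Rightarrow> nat \<Rightarrow> real" where
  "zeta_star_2 n j =
     (\<Sum>k\<in>{k. (\<forall>i<j. 1 \<le> k i \<and> k i \<le> n) \<and> (\<forall>i. Suc i < j \<longrightarrow> k (Suc i) \<le> k i)
             \<and> (\<forall>i\<ge>j. k i = 1)}.
        \<Prod>i<j. 1 / (real (k i))^2)"

end

theory Submission
  imports Defs
begin

text \<open>Write I(m, n) for the integral. Integrating x^(2m) against the second derivative of
  cos^(2n+2) by parts twice (no boundary terms survive on [0, pi/2]) gives
  (2n+2)^2 I(m, n+1) = (2n+2)(2n+1) I(m, n) - 2m(2m-1) I(m-1, n+1).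
  Divided by (2m)! binom(2n, n) / 4^n, the right-hand side satisfies the same recursion, thanks to
  zeta*_(n+1)({2}_(j+1)) = zeta*_n({2}_(j+1)) + zeta*_(n+1)({2}_j) / (n+1)^2, and both sides
  agree for n = 0, where only the j = 0 term survives.\<close>

lemma has_integral_Green_identity:
  fixes u u' u'' v v' v'' :: "real \<Rightarrow> real"
  assumes "a \<le> b"
    and "\<And>x. (u has_real_derivative u' x) (at x)" "\<And>x. (u' has_real_derivative u'' x) (at x)"
    and "\<And>x. (v has_real_derivative v' x) (at x)" "\<And>x. (v' has_real_derivative v'' x) (at x)"
  shows "((\<lambda>x. u x * v'' x - u'' x * v x) has_integral
           (u b * v' b - u' b * v b) - (u a * v' a - u' a * v a)) {a..b}"
proof (rule fundamental_theorem_of_calculus[OF \<open>a \<le> b\<close>])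
  fix x
  have "((\<lambda>x. u x * v' x - u' x * v x) has_real_derivative u x * v'' x - u'' x * v x) (at x)"
    by (rule derivative_eq_intros assms refl)+ (simp add: algebra_simps)
  then show "((\<lambda>x. u x * v' x - u' x * v x) has_vector_derivative u x * v'' x - u'' x * v x)
               (at x within {a..b})"
    by (simp add: has_real_derivative_iff_has_vector_derivative[symmetric] has_field_derivative_at_within)
qed

lemma DERIV_cos_power_Suc:
  "((\<lambda>x. cos x ^ Suc k) has_real_derivative - real (Suc k) * cos x ^ k * sin x) (at x)"
  by (rule derivative_eq_intros refl | simp add: algebra_simps)+

lemma DERIV_cos_power_Suc_deriv:
  "((\<lambda>x. - real (Suc (Suc k)) * cos x ^ Suc k * sin x) has_real_derivative
      real (Suc (Suc k)) * real (Suc k) * cos x ^ k - real (Suc (Suc k))^2 * cos x ^ Suc (Suc k)) (at x)"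
proof -
  have sin2: "sin x * sin x = 1 - cos x * cos x"
    using sin_squared_eq[of x] by (simp add: power2_eq_square)
  have "((\<lambda>x. - real (Suc (Suc k)) * cos x ^ Suc k * sin x) has_real_derivative
      - real (Suc (Suc k)) * ((- real (Suc k) * cos x ^ k * sin x) * sin x + cos x ^ Suc k * cos x)) (at x)"
    by (rule derivative_eq_intros DERIV_cos_power_Suc refl)+ (simp add: algebra_simps)
  moreover have "- real (Suc (Suc k)) * ((- real (Suc k) * cos x ^ k * sin x) * sin x + cos x ^ Suc k * cos x)
      = real (Suc (Suc k)) * real (Suc k) * cos x ^ k - real (Suc (Suc k))^2 * cos x ^ Suc (Suc k)"
    by (simp only: power_Suc mult.assoc[of _ "sin x"] sin2) (simp add: algebra_simps power2_eq_square)
  ultimately show ?thesis by simp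
qed

definition cos_moment :: "nat \<Rightarrow> nat \<Rightarrow> real" where
  "cos_moment m n = integral {0..pi/2} (\<lambda>x. x^(2*m) * cos x^(2*n))"

lemma has_integral_cos_moment:
  "((\<lambda>x. x^(2*m) * cos x^(2*n)) has_integral cos_moment m n) {0..pi/2}"
  unfolding cos_moment_def
  by (intro integrable_integral integrable_continuous_interval continuous_intros)

lemma cos_moment_0_right: "cos_moment m 0 = (pi/2)^(2*m+1) / (2*m+1)"
proof -
  have "((\<lambda>x. x^(2*m)) has_integral (pi/2)^Suc (2*m) / Suc (2*m) - 0^Suc (2*m) / Suc (2*m)) {0..pi/2}"
  proof (rule fundamental_theorem_of_calculus)
    fix x
    have "((\<lambda>x. x^Suc (2*m) / Suc (2*m)) has_real_derivative x^(2*m)) (at x within {0..pi/2})"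
      by (rule derivative_eq_intros refl | simp)+
    then show "((\<lambda>x. x^Suc (2*m) / Suc (2*m)) has_vector_derivative x^(2*m)) (at x within {0..pi/2})"
      by (simp add: has_real_derivative_iff_has_vector_derivative)
  qed simp
  then show ?thesis
    unfolding cos_moment_def by (simp add: integral_unique)
qed

text \<open>Green's identity for u = x^(2m) and v = cos^(2q+2) on [0, pi/2]: all boundary terms
  vanish, since sin 0 = 0, cos (pi/2) = 0 and x^(2m-1) vanishes at 0 unless the factor 2m does.\<close>
lemma cos_moment_Suc_right:
  "real (2*q+2)^2 * cos_moment m (Suc q) =
     real (2*q+2) * real (2*q+1) * cos_moment m q
     - real (2*m) * real (2*m-1) * cos_moment (m-1) (Suc q)"
proof -
  define u' where "u' x = real (2*m) * x^(2*m-1)" for x :: real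
  define u'' where "u'' x = real (2*m) * (real (2*m-1) * x^(2*m-1-1))" for x :: real
  define v' where "v' x = - real (Suc (Suc (2*q))) * cos x ^ Suc (2*q) * sin x" for x
  define v'' where "v'' x = real (Suc (Suc (2*q))) * real (Suc (2*q)) * cos x ^ (2*q)
    - real (Suc (Suc (2*q)))^2 * cos x ^ Suc (Suc (2*q))" for x
  have green: "((\<lambda>x. x^(2*m) * v'' x - u'' x * cos x ^ Suc (Suc (2*q))) has_integral
      ((pi/2)^(2*m) * v' (pi/2) - u' (pi/2) * cos (pi/2) ^ Suc (Suc (2*q)))
       - (0^(2*m) * v' 0 - u' 0 * cos 0 ^ Suc (Suc (2*q)))) {0..pi/2}"
  proof (rule has_integral_Green_identity)
    fix x :: real
    show "((\<lambda>x. x^(2*m)) has_real_derivative u' x) (at x)"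
      using DERIV_pow[of "2*m" x] by (simp add: u'_def)
    show "(u' has_real_derivative u'' x) (at x)"
      using DERIV_cmult[OF DERIV_pow[of "2*m-1" x], of "real (2*m)"]
      by (simp add: u'_def[abs_def] u''_def)
    show "((\<lambda>x. cos x ^ Suc (Suc (2*q))) has_real_derivative v' x) (at x)"
      unfolding v'_def by (rule DERIV_cos_power_Suc)
    show "(v' has_real_derivative v'' x) (at x)"
      unfolding v'_def[abs_def] v''_def by (rule DERIV_cos_power_Suc_deriv)
  qed simp
  have boundary: "((pi/2)^(2*m) * v' (pi/2) - u' (pi/2) * cos (pi/2) ^ Suc (Suc (2*q)))
       - (0^(2*m) * v' 0 - u' 0 * cos 0 ^ Suc (Suc (2*q))) = 0"
    by (cases m) (simp_all add: u'_def v'_def)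
  have moments: "((\<lambda>x. x^(2*m) * v'' x - u'' x * cos x ^ Suc (Suc (2*q))) has_integral
      real (2*q+2) * real (2*q+1) * cos_moment m q - real (2*q+2)^2 * cos_moment m (Suc q)
      - real (2*m) * real (2*m-1) * cos_moment (m-1) (Suc q)) {0..pi/2}"
  proof -
    have "2*m-1-1 = 2*(m-1)" "Suc (Suc (2*q)) = 2 * Suc q" by simp_all
    then have "x^(2*m) * v'' x - u'' x * cos x ^ Suc (Suc (2*q)) =
        real (2*q+2) * real (2*q+1) * (x^(2*m) * cos x ^ (2*q))
        - real (2*q+2)^2 * (x^(2*m) * cos x ^ (2 * Suc q))
        - real (2*m) * real (2*m-1) * (x^(2*(m-1)) * cos x ^ (2 * Suc q))" for x
      unfolding u''_def v''_def by (simp add: algebra_simps)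
    then show ?thesis
      by (simp only:) (intro has_integral_diff has_integral_mult_right has_integral_cos_moment)
  qed
  from has_integral_unique[OF green[unfolded boundary] moments] show ?thesis
    by linarith
qed

definition zeta_star_2_indices :: "nat \<Rightarrow> nat \<Rightarrow> (nat \<Rightarrow> nat) set" where
  "zeta_star_2_indices n j =
     {k. (\<forall>i<j. 1 \<le> k i \<and> k i \<le> n) \<and> (\<forall>i. Suc i < j \<longrightarrow> k (Suc i) \<le> k i)
         \<and> (\<forall>i\<ge>j. k i = 1)}"

lemma zeta_star_2_eq_sum_indices:
  "zeta_star_2 n j = (\<Sum>k\<in>zeta_star_2_indices n j. \<Prod>i<j. 1 / (real (k i))^2)"
  unfolding zeta_star_2_def zeta_star_2_indices_def ..

lemma finite_zeta_star_2_indices: "finite (zeta_star_2_indices n j)"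
proof (rule finite_subset)
  show "zeta_star_2_indices n j \<subseteq> {k. \<forall>i. (i \<in> {..<j} \<longrightarrow> k i \<in> {1..n}) \<and> (i \<notin> {..<j} \<longrightarrow> k i = 1)}"
    unfolding zeta_star_2_indices_def by auto
qed (rule finite_set_of_finite_funs; simp)

lemma zeta_star_2_indices_le_first:
  assumes "k \<in> zeta_star_2_indices n j" "i < j"
  shows "k i \<le> k 0"
  using assms(2)
proof (induction i)
  case (Suc i)
  then have "k (Suc i) \<le> k i"
    using assms(1) unfolding zeta_star_2_indices_def by auto
  with Suc show ?case by simp
qed simp

lemma zeta_star_2_0_right [simp]: "zeta_star_2 n 0 = 1"
proof -
  have "zeta_star_2_indices n 0 = {\<lambda>_. 1}"
    unfolding zeta_star_2_indices_def by auto
  then show ?thesis by (simp add: zeta_star_2_eq_sum_indices)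
qed

lemma zeta_star_2_0_left: "j > 0 \<Longrightarrow> zeta_star_2 0 j = 0"
proof -
  assume "j > 0"
  then have "zeta_star_2_indices 0 j = {}"
    unfolding zeta_star_2_indices_def by auto
  then show ?thesis by (simp add: zeta_star_2_eq_sum_indices)
qed

text \<open>Split the tuples according to whether k_1 = n + 1; dropping k_1 from those that do is a
  bijection onto the tuples of depth j.\<close>
lemma zeta_star_2_Suc_Suc:
  "zeta_star_2 (Suc n) (Suc j) = zeta_star_2 n (Suc j) + zeta_star_2 (Suc n) j / (real (Suc n))^2"
proof -
  let ?I = "zeta_star_2_indices"
  let ?w = "\<lambda>j k. \<Prod>i<j. 1 / (real (k i))^2"
  let ?top = "?I (Suc n) (Suc j) \<inter> {k. k 0 = Suc n}"
  have rest: "?I (Suc n) (Suc j) - {k. k 0 = Suc n} = ?I n (Suc j)"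
  proof (intro equalityI subsetI)
    fix k assume k: "k \<in> ?I (Suc n) (Suc j) - {k. k 0 = Suc n}"
    then have "k 0 \<le> n" unfolding zeta_star_2_indices_def by force
    with k zeta_star_2_indices_le_first[of k "Suc n" "Suc j"] show "k \<in> ?I n (Suc j)"
      unfolding zeta_star_2_indices_def by fastforce
  qed (auto simp: zeta_star_2_indices_def)
  have top: "(\<Sum>k\<in>?top. ?w (Suc j) k) = (\<Sum>k\<in>?I (Suc n) j. ?w j k / (real (Suc n))^2)"
  proof (rule sum.reindex_bij_witness[where i="case_nat (Suc n)" and j="\<lambda>k i. k (Suc i)"])
    fix k assume "k \<in> ?top"
    then show "case_nat (Suc n) (\<lambda>i. k (Suc i)) = k"
      by (auto split: nat.split)
    show "(\<lambda>i. k (Suc i)) \<in> ?I (Suc n) j"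
      using \<open>k \<in> ?top\<close> unfolding zeta_star_2_indices_def by auto
    show "?w j (\<lambda>i. k (Suc i)) / (real (Suc n))^2 = ?w (Suc j) k"
      using \<open>k \<in> ?top\<close> by (simp only: prod.lessThan_Suc_shift) (simp add: field_simps)
  next
    fix k assume "k \<in> ?I (Suc n) j"
    then show "case_nat (Suc n) k \<in> ?top"
      unfolding zeta_star_2_indices_def by (auto split: nat.split)
  qed simp
  have "zeta_star_2 (Suc n) (Suc j) =
      (\<Sum>k\<in>?top. ?w (Suc j) k) + (\<Sum>k\<in>?I (Suc n) (Suc j) - {k. k 0 = Suc n}. ?w (Suc j) k)"
    unfolding zeta_star_2_eq_sum_indices by (rule sum.Int_Diff[OF finite_zeta_star_2_indices])
  then show ?thesis
    unfolding top rest by (simp add: zeta_star_2_eq_sum_indices sum_divide_distrib)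
qed

definition zeta_series :: "nat \<Rightarrow> nat \<Rightarrow> real" where
  "zeta_series m n = (\<Sum>j=0..m. (-1) ^ j * zeta_star_2 n j / (2 ^ (2*j) * fact (2*m - 2*j + 1))
                        * (pi/2) ^ (2*m - 2*j + 1))"

lemma zeta_series_0_left: "zeta_series 0 n = pi/2"
  by (simp add: zeta_series_def)

lemma zeta_series_0_right: "zeta_series m 0 = (pi/2)^(2*m+1) / fact (2*m+1)"
proof -
  have "zeta_series m 0 = (\<Sum>j\<in>{0}. (-1) ^ j * zeta_star_2 0 j / (2 ^ (2*j) * fact (2*m - 2*j + 1))
                              * (pi/2) ^ (2*m - 2*j + 1))"
    unfolding zeta_series_def
    by (rule sum.mono_neutral_right) (auto simp: zeta_star_2_0_left)
  then show ?thesis by simp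
qed

lemma zeta_series_Suc_Suc:
  "zeta_series (Suc p) (Suc q) = zeta_series (Suc p) q - zeta_series p (Suc q) / (4 * real (Suc q)^2)"
proof -
  define g where "g n j = (-1) ^ j * zeta_star_2 n j / (2 ^ (2*j) * fact (2 * Suc p - 2*j + 1))
                            * (pi/2) ^ (2 * Suc p - 2*j + 1)" for n j
  define t where "t j = (-1) ^ j * zeta_star_2 (Suc q) j / (2 ^ (2*j) * fact (2*p - 2*j + 1))
                          * (pi/2) ^ (2*p - 2*j + 1)" for j
  have Suc_p: "zeta_series (Suc p) n = g n 0 + (\<Sum>j=0..p. g n (Suc j))" for n
    unfolding zeta_series_def g_def by (subst sum.atLeast0_atMost_Suc_shift) simp
  have p: "zeta_series p (Suc q) = (\<Sum>j=0..p. t j)"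
    unfolding zeta_series_def t_def ..
  have "g (Suc q) (Suc j) = g q (Suc j) - t j / (4 * real (Suc q)^2)" for j
  proof -
    have "2 * Suc p - 2 * Suc j + 1 = 2*p - 2*j + 1" "(2::real) ^ (2 * Suc j) = 4 * 2 ^ (2*j)"
      by simp_all
    then show ?thesis
      unfolding g_def t_def zeta_star_2_Suc_Suc by (simp add: field_simps del: fact_Suc)
  qed
  moreover have "g (Suc q) 0 = g q 0"
    by (simp add: g_def)
  ultimately show ?thesis
    unfolding Suc_p p by (simp add: sum_subtractf sum_divide_distrib)
qed

lemma central_binomial_Suc:
  "((2 * Suc q) choose Suc q) * Suc q * Suc q = (2*q+2) * (2*q+1) * ((2*q) choose q)"
proof -
  have "Suc (2*q) choose q = Suc (2*q) choose Suc q"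
    using binomial_symmetric[of q "Suc (2*q)"] by simp
  then have "((2 * Suc q) choose Suc q) * Suc q = (2*q+2) * (Suc (2*q) choose Suc q)"
    using Suc_times_binomial_eq[of "Suc (2*q)" q] by (simp del: binomial_Suc_Suc)
  also have "\<dots> * Suc q = (2*q+2) * (Suc (2*q) * ((2*q) choose q))"
    by (simp only: mult.assoc Suc_times_binomial_eq)
  finally show ?thesis
    by (simp only: Suc_eq_plus1 mult.assoc)
qed

lemma central_binomial_ratio_Suc:
  "real (2*q+2)^2 * (real ((2 * Suc q) choose Suc q) / 4 ^ Suc q)
     = real (2*q+2) * real (2*q+1) * (real ((2*q) choose q) / 4 ^ q)"
proof -
  define X where "X = real ((2 * Suc q) choose Suc q)"
  have "real (2*q+2)^2 * (X / 4 ^ Suc q) = X * real (Suc q) * real (Suc q) / 4 ^ q"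
    by (simp add: field_simps power2_eq_square)
  also have "\<dots> = real (2*q+2) * real (2*q+1) * real ((2*q) choose q) / 4 ^ q"
    unfolding X_def by (simp only: central_binomial_Suc flip: of_nat_mult)
  finally show ?thesis
    unfolding X_def by simp
qed

lemma fact_double_Suc: "(fact (2 * Suc p) :: real) = real (2 * Suc p) * real (2 * Suc p - 1) * fact (2*p)"
  by (simp add: algebra_simps)

lemma cos_moment_eq_zeta_series_Suc:
  assumes IH: "\<And>m. cos_moment m q = fact (2*m) * (real ((2*q) choose q) / 4 ^ q) * zeta_series m q"
  shows "cos_moment m (Suc q) =
    fact (2*m) * (real ((2 * Suc q) choose Suc q) / 4 ^ Suc q) * zeta_series m (Suc q)"
proof -
  define c where "c n = real ((2*n) choose n) / 4 ^ n" for n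
  define K where "K = real (2*q+2)^2"
  have "K \<noteq> 0" unfolding K_def by simp
  have c_Suc: "K * c (Suc q) = real (2*q+2) * real (2*q+1) * c q"
    unfolding K_def c_def by (rule central_binomial_ratio_Suc)
  have "cos_moment m (Suc q) = fact (2*m) * c (Suc q) * zeta_series m (Suc q)"
  proof (induction m)
    case 0
    have "K * cos_moment 0 (Suc q) = real (2*q+2) * real (2*q+1) * cos_moment 0 q"
      using cos_moment_Suc_right[of q 0] by (simp add: K_def)
    also have "\<dots> = K * (fact 0 * c (Suc q) * zeta_series 0 (Suc q))"
      by (simp add: IH c_def[symmetric] c_Suc zeta_series_0_left)
    finally show ?case
      using \<open>K \<noteq> 0\<close> by simp
  next
    case (Suc p)
    have "K * cos_moment (Suc p) (Suc q) =
        real (2*q+2) * real (2*q+1) * cos_moment (Suc p) q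
        - real (2 * Suc p) * real (2 * Suc p - 1) * cos_moment p (Suc q)"
      using cos_moment_Suc_right[of q "Suc p"] by (simp add: K_def)
    also have "\<dots> = (real (2*q+2) * real (2*q+1) * c q) * fact (2 * Suc p) * zeta_series (Suc p) q
        - (real (2 * Suc p) * real (2 * Suc p - 1) * fact (2*p)) * c (Suc q) * zeta_series p (Suc q)"
      by (simp only: IH c_def[symmetric] Suc.IH) (simp add: algebra_simps)
    also have "\<dots> = fact (2 * Suc p) * c (Suc q) * (K * zeta_series (Suc p) q - zeta_series p (Suc q))"
      by (simp only: c_Suc[symmetric] fact_double_Suc[symmetric]) (simp add: algebra_simps)
    also have "\<dots> = K * (fact (2 * Suc p) * c (Suc q) * zeta_series (Suc p) (Suc q))"
    proof -
      have "K = 4 * real (Suc q)^2"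
        by (simp add: K_def power2_eq_square algebra_simps)
      then show ?thesis
        using \<open>K \<noteq> 0\<close> by (simp add: zeta_series_Suc_Suc field_simps)
    qed
    finally show ?case
      using \<open>K \<noteq> 0\<close> by simp
  qed
  then show ?thesis
    unfolding c_def .
qed

lemma cos_moment_eq_zeta_series:
  "cos_moment m n = fact (2*m) * (real ((2*n) choose n) / 4 ^ n) * zeta_series m n"
proof (induction n arbitrary: m)
  case 0
  have "fact (2*m+1) = real (2*m+1) * (fact (2*m) :: real)"
    by simp
  then show ?case
    by (simp add: cos_moment_0_right zeta_series_0_right)
next
  case (Suc q)
  then show ?case
    by (rule cos_moment_eq_zeta_series_Suc)
qed

theorem mainTheorem11:
  fixes m n :: nat
  assumes "n \<ge> 1"
  shows "integral {0..pi/2} (\<lambda>x. x ^ (2*m) * cos x ^ (2*n)) =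
    fact (2*m) * (real ((2*n) choose n) / 4 ^ n) *
    (\<Sum>j=0..m. (-1) ^ j * zeta_star_2 n j / (2 ^ (2*j) * fact (2*m - 2*j + 1))
                 * (pi/2) ^ (2*m - 2*j + 1))"
  \<comment> \<open>The identity holds for n = 0 as well.\<close>
  using cos_moment_eq_zeta_series[of m n] unfolding cos_moment_def zeta_series_def .

end
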